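(* Let $A,Q\in\mathbb{R}^{n\times n}$, $B,L\in\mathbb{R}^{n\times m}$, $R\in\mathbb{R}^{m\times m}$, and $A_0^i\in\mathbb{R}^{n\times n}$, $B_0^i\in\mathbb{R}^{n\times m}$ ($i=1,\dots,r$), with $R\succ0$ and $\begin{bmatrix} Q & L\\ L^{\mathsf T} & R\end{bmatrix}\succeq 0$. For symmetric $X\succeq 0$ define $$\Omega(X)=\begin{bmatrix} -G_{\mathrm c}(X) & -A_{\mathrm c}(X)\\ -[A_{\mathrm c}(X)]^{\mathsf T} & H_{\mathrm c}(X)\end{bmatrix}\in\mathbb{R}^{2n\times 2n}.$$ Then $\Omega(X)\succeq\Omega(Y)$ for all symmetric $X,Y$ with $X\succeq Y\succeq 0$.
   Context: For symmetric $X$: $\Pi_{11}(X)=\sum_{i=1}^r (A_0^i)^{\mathsf T}XA_0^i$, $\Pi_{12}(X)=\sum_{i=1}^r (A_0^i)^{\mathsf T}XB_0^i$, $\Pi_{22}(X)=\sum_{i=1}^r (B_0^i)^{\mathsf T}XB_0^i$; $L_{\mathrm c}(X)=L+\Pi_{12}(X)$, $R_{\mathrm c}(X)=R+\Pi_{22}(X)$, $Q_{\mathrm c}(X)=Q+\Pi_{11}(X)$; $A_{\mathrm c}(X)=A-B[R_{\mathrm c}(X)]^{-1}[L_{\mathrm c}(X)]^{\mathsf T}$, $G_{\mathrm c}(X)=B[R_{\mathrm c}(X)]^{-1}B^{\mathsf T}$, $H_{\mathrm c}(X)=Q_{\mathrm c}(X)-L_{\mathrm c}(X)[R_{\mathrm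 c}(X)]^{-1}[L_{\mathrm c}(X)]^{\mathsf T}$. $\succeq$ is the Loewner order on symmetric matrices. *)

theory Defs
  imports "HOL-Analysis.Analysis"
begin

definition sym_mat :: "real^'n^'n \<Rightarrow> bool" where
  "sym_mat M \<longleftrightarrow> transpose M = M"

definition psd :: "real^'n^'n \<Rightarrow> bool" where
  "psd M \<longleftrightarrow> sym_mat M \<and> (\<forall>x. 0 \<le> x \<bullet> (M *v x))"

definition pd :: "real^'n^'n \<Rightarrow> bool" where
  "pd M \<longleftrightarrow> sym_mat M \<and> (\<forall>x. x \<noteq> 0 \<longrightarrow> 0 < x \<bullet> (M *v x))"

definition loewner_ge :: "real^'n^'n \<Rightarrow> real^'n^'n \<Rightarrow> bool" (infix "\<succeq>\<^sub>L" 50) where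
  "X \<succeq>\<^sub>L Y \<longleftrightarrow> sym_mat X \<and> sym_mat Y \<and> psd (X - Y)"

definition block_mat ::
  "real^'a^'a \<Rightarrow> real^'b^'a \<Rightarrow> real^'a^'b \<Rightarrow> real^'b^'b \<Rightarrow> real^('a + 'b)^('a + 'b)" where
  "block_mat P M N S = (\<chi> i j. case i of
      Inl i' \<Rightarrow> (case j of Inl j' \<Rightarrow> P $ i' $ j' | Inr j' \<Rightarrow> M $ i' $ j')
    | Inr i' \<Rightarrow> (case j of Inl j' \<Rightarrow> N $ i' $ j' | Inr j' \<Rightarrow> S $ i' $ j'))"

text \<open>The operators of the paper; the r pairs (A_0^i, B_0^i) are indexed by i < r.\<close>

definition Pi11 :: "nat \<Rightarrow> (nat \<Rightarrow> real^'n^'n) \<Rightarrow> real^'n^'n \<Rightarrow> real^'n^'n" where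
  "Pi11 r A0 X = (\<Sum>i<r. transpose (A0 i) ** X ** A0 i)"

definition Pi12 :: "nat \<Rightarrow> (nat \<Rightarrow> real^'n^'n) \<Rightarrow> (nat \<Rightarrow> real^'m^'n) \<Rightarrow> real^'n^'n \<Rightarrow> real^'m^'n" where
  "Pi12 r A0 B0 X = (\<Sum>i<r. transpose (A0 i) ** X ** B0 i)"

definition Pi22 :: "nat \<Rightarrow> (nat \<Rightarrow> real^'m^'n) \<Rightarrow> real^'n^'n \<Rightarrow> real^'m^'m" where
  "Pi22 r B0 X = (\<Sum>i<r. transpose (B0 i) ** X ** B0 i)"

definition Lc where "Lc L r A0 B0 X = L + Pi12 r A0 B0 X"
definition Rc where "Rc R r B0 X = R + Pi22 r B0 X"
definition Qc where "Qc Q r A0 X = Q + Pi11 r A0 X"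

definition Ac :: "real^'n^'n \<Rightarrow> real^'m^'n \<Rightarrow> real^'m^'n \<Rightarrow> real^'m^'m \<Rightarrow> nat \<Rightarrow>
    (nat \<Rightarrow> real^'n^'n) \<Rightarrow> (nat \<Rightarrow> real^'m^'n) \<Rightarrow> real^'n^'n \<Rightarrow> real^'n^'n" where
  "Ac A B L R r A0 B0 X = A - B ** matrix_inv (Rc R r B0 X) ** transpose (Lc L r A0 B0 X)"

definition Gc :: "real^'m^'n \<Rightarrow> real^'m^'m \<Rightarrow> nat \<Rightarrow> (nat \<Rightarrow> real^'m^'n) \<Rightarrow> real^'n^'n \<Rightarrow> real^'n^'n" where
  "Gc B R r B0 X = B ** matrix_inv (Rc R r B0 X) ** transpose B"

definition Hc :: "real^'n^'n \<Rightarrow> real^'m^'n \<Rightarrow> real^'m^'m \<Rightarrow> nat \<Rightarrow>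
    (nat \<Rightarrow> real^'n^'n) \<Rightarrow> (nat \<Rightarrow> real^'m^'n) \<Rightarrow> real^'n^'n \<Rightarrow> real^'n^'n" where
  "Hc Q L R r A0 B0 X = Qc Q r A0 X - Lc L r A0 B0 X ** matrix_inv (Rc R r B0 X) ** transpose (Lc L r A0 B0 X)"

definition Omega :: "real^'n^'n \<Rightarrow> real^'m^'n \<Rightarrow> real^'n^'n \<Rightarrow> real^'m^'n \<Rightarrow> real^'m^'m \<Rightarrow> nat \<Rightarrow>
    (nat \<Rightarrow> real^'n^'n) \<Rightarrow> (nat \<Rightarrow> real^'m^'n) \<Rightarrow> real^'n^'n \<Rightarrow> real^('n + 'n)^('n + 'n)" where
  "Omega A B Q L R r A0 B0 X =
     block_mat (- Gc B R r B0 X) (- Ac A B L R r A0 B0 X)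
               (- transpose (Ac A B L R r A0 B0 X)) (Hc Q L R r A0 B0 X)"

end

theory Submission
  imports Defs
begin

text \<open>
  For \<open>X \<succeq> 0\<close> the matrix \<open>R\<^sub>c(X)\<close> is positive definite, and completing the square in \<open>w\<close>
  (a Schur complement) shows that the quadratic form of \<open>\<Omega>(X)\<close> at \<open>(u, v)\<close> is the minimum over
  \<open>w\<close> of \<open>J\<^sub>X(u, v, w) = [v; w]\<^sup>T [Q\<^sub>c L\<^sub>c; L\<^sub>c\<^sup>T R\<^sub>c](X) [v; w] - 2 u\<^sup>T (A v + B w)\<close>.
  Since \<open>[Q\<^sub>c L\<^sub>c; L\<^sub>c\<^sup>T R\<^sub>c](X) = [Q L; L\<^sup>T R] + \<Sum>\<^sub>i [A\<^sub>0\<^sup>i B\<^sub>0\<^sup>i]\<^sup>T X [A\<^sub>0\<^sup>i B\<^sub>0\<^sup>i]\<close> is monotone in \<open>X\<close>,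
  so is \<open>J\<^sub>X\<close>, and a pointwise minimum of monotone functions is monotone.
  Of the hypothesis on \<open>[Q L; L\<^sup>T R]\<close> only the symmetry of \<open>Q\<close> is needed.
\<close>

lemma transpose_add: "transpose (M + N) = transpose M + transpose (N :: 'a::semiring_1^'n^'m)"
  by (simp add: vec_eq_iff transpose_def)

lemma transpose_diff: "transpose (M - N) = transpose M - transpose (N :: 'a::ring_1^'n^'m)"
  by (simp add: vec_eq_iff transpose_def)

lemma transpose_uminus: "transpose (- M) = - transpose (M :: 'a::ring_1^'n^'m)"
  by (simp add: vec_eq_iff transpose_def)

lemma transpose_sum: "transpose (sum M S) = (\<Sum>i\<in>S. transpose (M i :: 'a::semiring_1^'n^'m))"
  by (simp add: vec_eq_iff transpose_def)

lemma matrix_vector_mult_uminus_left: "(- M) *v x = - (M *v (x :: 'a::ring_1^'n))"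
  by (simp add: vec_eq_iff matrix_vector_mult_def sum_negf)

lemma matrix_vector_mult_sum_left: "sum M S *v x = (\<Sum>i\<in>S. M i *v (x :: 'a::semiring_1^'n))"
  by (simp add: vec_eq_iff matrix_vector_mult_def sum_distrib_right) (intro allI sum.swap)

lemma inner_transpose_matrix_vector: "x \<bullet> (transpose P *v y) = (P *v x) \<bullet> (y :: real^'n)"
  by (metis dot_lmul_matrix inner_commute transpose_matrix_vector)

lemma transpose_matrix_vector_inner: "(transpose P *v x) \<bullet> y = x \<bullet> (P *v (y :: real^'n))"
  by (metis inner_commute inner_transpose_matrix_vector)

lemma inner_sandwich:
  "x \<bullet> ((transpose P ** X ** P') *v y) = (P *v x) \<bullet> (X *v (P' *v (y :: real^'n)))"
  by (simp only: matrix_vector_mul_assoc[symmetric] inner_transpose_matrix_vector)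

lemma sym_mat_inner_commute: "sym_mat M \<Longrightarrow> x \<bullet> (M *v y) = y \<bullet> (M *v x)"
  unfolding sym_mat_def by (metis inner_commute inner_transpose_matrix_vector)

lemma sym_mat_sandwich: "sym_mat X \<Longrightarrow> sym_mat (transpose P ** X ** P)"
  unfolding sym_mat_def by (simp add: matrix_transpose_mul matrix_mul_assoc)

lemma sym_mat_sum: "(\<And>i. i \<in> S \<Longrightarrow> sym_mat (M i)) \<Longrightarrow> sym_mat (sum M S)"
  unfolding sym_mat_def by (simp add: transpose_sum)

lemma sym_mat_block_mat_upper_left:
  assumes "sym_mat (block_mat P M N S)"
  shows "sym_mat P"
proof -
  have "transpose (block_mat P M N S) $ Inl i $ Inl j = block_mat P M N S $ Inl i $ Inl j" for i j
    using assms unfolding sym_mat_def by simp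
  then show ?thesis
    unfolding sym_mat_def by (simp add: vec_eq_iff transpose_def block_mat_def)
qed

lemma psd_sandwich: "psd X \<Longrightarrow> psd (transpose P ** X ** P)"
  unfolding psd_def by (simp add: sym_mat_sandwich inner_sandwich)

lemma psd_sum: "(\<And>i. i \<in> S \<Longrightarrow> psd (M i)) \<Longrightarrow> psd (sum M S)"
  unfolding psd_def
  by (simp add: sym_mat_sum matrix_vector_mult_sum_left inner_sum_right sum_nonneg)

lemma pd_add_psd: "pd R \<Longrightarrow> psd P \<Longrightarrow> pd (R + P)"
  unfolding pd_def psd_def sym_mat_def
  by (simp add: transpose_add matrix_vector_mult_add_rdistrib inner_add_right add_pos_nonneg)

lemma loewner_ge_iff_inner:
  "X \<succeq>\<^sub>L Y \<longleftrightarrow> sym_mat X \<and> sym_mat Y \<and> (\<forall>x. x \<bullet> (Y *v x) \<le> x \<bullet> (X *v x))"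
  unfolding loewner_ge_def psd_def sym_mat_def
  by (auto simp: transpose_diff matrix_vector_mult_diff_rdistrib inner_diff_right)

lemma psd_if_loewner_ge: "X \<succeq>\<^sub>L Y \<Longrightarrow> psd Y \<Longrightarrow> psd X"
  unfolding loewner_ge_iff_inner psd_def by (meson order_trans)

lemma pd_invertible: "pd R \<Longrightarrow> invertible R"
  unfolding pd_def invertible_left_inverse matrix_left_invertible_ker
  by (metis inner_zero_right order.irrefl)

lemma pd_matrix_inv:
  assumes "pd R"
  shows "R ** matrix_inv R = mat 1" and "sym_mat (matrix_inv R)"
proof -
  have "R ** matrix_inv R = mat 1 \<and> matrix_inv R ** R = mat 1"
    using pd_invertible[OF assms] unfolding invertible_def matrix_inv_def by (rule someI_ex)
  then show right_inverse: "R ** matrix_inv R = mat 1"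
    by simp
  have "transpose (matrix_inv R) = transpose (matrix_inv R) ** R ** matrix_inv R"
    using right_inverse by (simp add: matrix_mul_assoc[symmetric])
  also have "transpose (matrix_inv R) ** R = transpose (R ** matrix_inv R)"
    using assms unfolding pd_def sym_mat_def by (simp add: matrix_transpose_mul)
  finally show "sym_mat (matrix_inv R)"
    unfolding sym_mat_def using right_inverse by simp
qed

lemma sym_mat_complete_square:
  assumes "sym_mat R" and "R *v d = c"
  shows "2 * (c \<bullet> w) + w \<bullet> (R *v w) = (w + d) \<bullet> (R *v (w + d)) - c \<bullet> d"
  using assms sym_mat_inner_commute[OF assms(1), of d w]
  by (simp add: matrix_vector_right_distrib inner_add_left inner_add_right inner_commute)

lemma pd_inverse_quadratic_form_le:
  assumes "pd R"
  shows "- (c \<bullet> (matrix_inv R *v c)) \<le> 2 * (c \<bullet> w) + w \<bullet> (R *v w)"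
proof -
  have "sym_mat R" and "R *v (matrix_inv R *v c) = c"
    using assms by (simp_all add: pd_def matrix_vector_mul_assoc pd_matrix_inv(1))
  moreover have "0 \<le> (w + matrix_inv R *v c) \<bullet> (R *v (w + matrix_inv R *v c))"
    using assms unfolding pd_def by (metis inner_zero_left order.strict_iff_not order.refl)
  ultimately show ?thesis
    using sym_mat_complete_square by fastforce
qed

lemma pd_inverse_quadratic_form_eq:
  fixes c :: "real^'n"
  assumes "pd R"
  defines "w \<equiv> - (matrix_inv R *v c)"
  shows "- (c \<bullet> (matrix_inv R *v c)) = 2 * (c \<bullet> w) + w \<bullet> (R *v w)"
proof -
  have "sym_mat R" and "R *v (matrix_inv R *v c) = c"
    using assms(1) by (simp_all add: pd_def matrix_vector_mul_assoc pd_matrix_inv(1))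
  from sym_mat_complete_square[OF this, of w] show ?thesis
    unfolding w_def by simp
qed

definition block_fst :: "real^('a::finite + 'b::finite) \<Rightarrow> real^'a" where
  "block_fst z = (\<chi> i. z $ Inl i)"

definition block_snd :: "real^('a::finite + 'b::finite) \<Rightarrow> real^'b" where
  "block_snd z = (\<chi> i. z $ Inr i)"

lemma transpose_block_mat:
  "transpose (block_mat P M N S) = block_mat (transpose P) (transpose N) (transpose M) (transpose S)"
  by (simp add: vec_eq_iff transpose_def block_mat_def split: sum.split)

lemma inner_block_mat:
  "z \<bullet> (block_mat P M N S *v z) =
     block_fst z \<bullet> (P *v block_fst z) + block_fst z \<bullet> (M *v block_snd z)
   + block_snd z \<bullet> (N *v block_fst z) + block_snd z \<bullet> (S *v block_snd z)"
  unfolding inner_vec_def matrix_vector_mult_def block_mat_def block_fst_def block_snd_def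
  by (simp add: UNIV_Plus_UNIV[symmetric] sum.Plus sum_distrib_left sum.distrib algebra_simps
      del: UNIV_Plus_UNIV)

lemma Pi_quadratic_form:
  assumes "sym_mat X"
  shows "v \<bullet> (Pi11 r A0 X *v v) + 2 * (v \<bullet> (Pi12 r A0 B0 X *v w)) + w \<bullet> (Pi22 r B0 X *v w) =
    (\<Sum>i<r. (A0 i *v v + B0 i *v w) \<bullet> (X *v (A0 i *v v + B0 i *v w)))"
proof -
  have "(p + q) \<bullet> (X *v (p + q)) = p \<bullet> (X *v p) + 2 * (p \<bullet> (X *v q)) + q \<bullet> (X *v q)" for p q
    using sym_mat_inner_commute[OF assms, of q p]
    by (simp add: matrix_vector_right_distrib inner_add_left inner_add_right)
  then show ?thesis
    unfolding Pi11_def Pi12_def Pi22_def matrix_vector_mult_sum_left inner_sum_right inner_sandwich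
    by (simp add: sum.distrib sum_distrib_left)
qed

context
  fixes A Q :: "real^'n^'n" and B L :: "real^'m^'n" and R :: "real^'m^'m"
    and r :: nat and A0 :: "nat \<Rightarrow> real^'n^'n" and B0 :: "nat \<Rightarrow> real^'m^'n"
begin

lemma Rc_pd: "pd R \<Longrightarrow> psd X \<Longrightarrow> pd (Rc R r B0 X)"
  unfolding Rc_def Pi22_def by (intro pd_add_psd psd_sum psd_sandwich)

lemma Omega_sym:
  assumes "pd (Rc R r B0 X)" and "sym_mat Q" and "sym_mat X"
  shows "sym_mat (Omega A B Q L R r A0 B0 X)"
proof -
  have "transpose (matrix_inv (Rc R r B0 X)) = matrix_inv (Rc R r B0 X)"
    using pd_matrix_inv(2)[OF assms(1)] unfolding sym_mat_def .
  moreover have "transpose (Qc Q r A0 X) = Qc Q r A0 X"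
    using assms(2) sym_mat_sum[of "{..<r}", OF sym_mat_sandwich[OF assms(3)]]
    unfolding Qc_def Pi11_def sym_mat_def by (simp add: transpose_add)
  ultimately show ?thesis
    unfolding sym_mat_def Omega_def transpose_block_mat Gc_def Ac_def Hc_def
    by (simp add: transpose_uminus transpose_diff matrix_transpose_mul matrix_mul_assoc)
qed

definition Omega_objective :: "real^'n^'n \<Rightarrow> real^'n \<Rightarrow> real^'n \<Rightarrow> real^'m \<Rightarrow> real" where
  "Omega_objective X u v w =
     v \<bullet> (Qc Q r A0 X *v v) + 2 * (v \<bullet> (Lc L r A0 B0 X *v w)) + w \<bullet> (Rc R r B0 X *v w)
     - 2 * (u \<bullet> (A *v v + B *v w))"

lemma Omega_objective_expand:
  assumes "sym_mat X"
  shows "Omega_objective X u v w =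
    v \<bullet> (Q *v v) + 2 * (v \<bullet> (L *v w)) + w \<bullet> (R *v w) - 2 * (u \<bullet> (A *v v + B *v w))
    + (\<Sum>i<r. (A0 i *v v + B0 i *v w) \<bullet> (X *v (A0 i *v v + B0 i *v w)))"
  using Pi_quadratic_form[OF assms, of v r A0 B0 w]
  unfolding Omega_objective_def Qc_def Lc_def Rc_def
  by (simp add: matrix_vector_mult_add_rdistrib inner_add_right algebra_simps)

lemma Omega_objective_mono:
  assumes "X \<succeq>\<^sub>L Y"
  shows "Omega_objective Y u v w \<le> Omega_objective X u v w"
  using assms unfolding loewner_ge_iff_inner by (simp add: Omega_objective_expand sum_mono)

lemma inner_Omega:
  fixes z :: "real^('n + 'n)"
  assumes "pd (Rc R r B0 X)"
  defines "c \<equiv> transpose (Lc L r A0 B0 X) *v block_snd z - transpose B *v block_fst z"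
  shows "z \<bullet> (Omega A B Q L R r A0 B0 X *v z) = block_snd z \<bullet> (Qc Q r A0 X *v block_snd z)
    - 2 * (block_fst z \<bullet> (A *v block_snd z)) - c \<bullet> (matrix_inv (Rc R r B0 X) *v c)"
proof -
  define u where "u = block_fst z"
  define v where "v = block_snd z"
  define Ri where "Ri = matrix_inv (Rc R r B0 X)"
  define a where "a = transpose B *v u"
  define b where "b = transpose (Lc L r A0 B0 X) *v v"
  have G: "u \<bullet> (Gc B R r B0 X *v u) = a \<bullet> (Ri *v a)"
    using inner_sandwich[of u "transpose B" Ri "transpose B" u]
    unfolding Gc_def Ri_def a_def by simp
  have Ac: "u \<bullet> (Ac A B L R r A0 B0 X *v v) = u \<bullet> (A *v v) - a \<bullet> (Ri *v b)"
    using inner_sandwich[of u "transpose B" Ri "transpose (Lc L r A0 B0 X)" v]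
    unfolding Ac_def Ri_def a_def b_def by (simp add: matrix_vector_mult_diff_rdistrib inner_diff_right)
  have H: "v \<bullet> (Hc Q L R r A0 B0 X *v v) = v \<bullet> (Qc Q r A0 X *v v) - b \<bullet> (Ri *v b)"
    using inner_sandwich[of v "transpose (Lc L r A0 B0 X)" Ri "transpose (Lc L r A0 B0 X)" v]
    unfolding Hc_def Ri_def b_def by (simp add: matrix_vector_mult_diff_rdistrib inner_diff_right)
  have "c \<bullet> (Ri *v c) = b \<bullet> (Ri *v b) - 2 * (a \<bullet> (Ri *v b)) + a \<bullet> (Ri *v a)"
    using sym_mat_inner_commute[OF pd_matrix_inv(2)[OF assms(1)], of a b]
    unfolding c_def u_def[symmetric] v_def[symmetric] a_def[symmetric] b_def[symmetric] Ri_def[symmetric]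
    by (simp add: matrix_vector_mult_diff_distrib inner_diff_left inner_diff_right)
  moreover have "v \<bullet> (transpose (Ac A B L R r A0 B0 X) *v u) = u \<bullet> (Ac A B L R r A0 B0 X *v v)"
    unfolding inner_transpose_matrix_vector by (rule inner_commute)
  ultimately show ?thesis
    unfolding Omega_def inner_block_mat u_def[symmetric] v_def[symmetric] Ri_def[symmetric]
    by (simp add: matrix_vector_mult_uminus_left G Ac H)
qed

lemma Omega_objective_alt_def:
  "Omega_objective X u v w = v \<bullet> (Qc Q r A0 X *v v) - 2 * (u \<bullet> (A *v v))
     + 2 * ((transpose (Lc L r A0 B0 X) *v v - transpose B *v u) \<bullet> w) + w \<bullet> (Rc R r B0 X *v w)"
  unfolding Omega_objective_def inner_diff_left transpose_matrix_vector_inner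
  by (simp add: inner_add_right algebra_simps del: transpose_matrix_vector)

lemma inner_Omega_le_objective:
  assumes "pd (Rc R r B0 X)"
  shows "z \<bullet> (Omega A B Q L R r A0 B0 X *v z) \<le> Omega_objective X (block_fst z) (block_snd z) w"
proof -
  define c where "c = transpose (Lc L r A0 B0 X) *v block_snd z - transpose B *v block_fst z"
  show ?thesis
    using pd_inverse_quadratic_form_le[OF assms, of c w]
    unfolding inner_Omega[OF assms] Omega_objective_alt_def c_def[symmetric] by linarith
qed

lemma inner_Omega_eq_objective:
  fixes z :: "real^('n + 'n)"
  assumes "pd (Rc R r B0 X)"
  defines "c \<equiv> transpose (Lc L r A0 B0 X) *v block_snd z - transpose B *v block_fst z"
  shows "z \<bullet> (Omega A B Q L R r A0 B0 X *v z) =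
    Omega_objective X (block_fst z) (block_snd z) (- (matrix_inv (Rc R r B0 X) *v c))"
  using pd_inverse_quadratic_form_eq[OF assms(1), of c]
  unfolding inner_Omega[OF assms(1)] Omega_objective_alt_def c_def[symmetric] by linarith

end

theorem lemma2p3:
  fixes A Q :: "real^'n^'n" and B L :: "real^'m^'n" and R :: "real^'m^'m"
    and r :: nat and A0 :: "nat \<Rightarrow> real^'n^'n" and B0 :: "nat \<Rightarrow> real^'m^'n"
    and X Y :: "real^'n^'n"
  assumes "pd R"
    and "psd (block_mat Q L (transpose L) R)"
    and "sym_mat X" and "sym_mat Y"
    and "X \<succeq>\<^sub>L Y" and "psd Y"
  shows "Omega A B Q L R r A0 B0 X \<succeq>\<^sub>L Omega A B Q L R r A0 B0 Y"
proof -
  have "sym_mat Q"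
    using assms(2) unfolding psd_def by (rule sym_mat_block_mat_upper_left[OF conjunct1])
  have pd_X: "pd (Rc R r B0 X)"
    using Rc_pd[OF assms(1) psd_if_loewner_ge[OF assms(5,6)]] .
  have pd_Y: "pd (Rc R r B0 Y)"
    using Rc_pd[OF assms(1,6)] .
  have "z \<bullet> (Omega A B Q L R r A0 B0 Y *v z) \<le> z \<bullet> (Omega A B Q L R r A0 B0 X *v z)" for z
  proof -
    obtain w where "z \<bullet> (Omega A B Q L R r A0 B0 X *v z) =
        Omega_objective A Q B L R r A0 B0 X (block_fst z) (block_snd z) w"
      by (rule that[OF inner_Omega_eq_objective[OF pd_X]])
    moreover have "z \<bullet> (Omega A B Q L R r A0 B0 Y *v z) \<le>
        Omega_objective A Q B L R r A0 B0 Y (block_fst z) (block_snd z) w"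
      by (rule inner_Omega_le_objective[OF pd_Y])
    ultimately show ?thesis
      using Omega_objective_mono[OF assms(5), of A Q B L R r A0 B0 "block_fst z" "block_snd z" w]
      by linarith
  qed
  then show ?thesis
    unfolding loewner_ge_iff_inner
    using Omega_sym[OF pd_X \<open>sym_mat Q\<close> assms(3)] Omega_sym[OF pd_Y \<open>sym_mat Q\<close> assms(4)] by blast
qed

end
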